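(* Let $\Omega\subset\mathbb R^m$ be an open, bounded, convex set and let $h:\mathbb R^k\times\Omega\to\mathbb R$ be continuous, such that for each $\mathcal X\in\mathbb R^k$ the function $h(\mathcal X,\cdot)$ is concave on $\Omega$. Then $H(\mathcal X):=\sup_{\tau\in\Omega}h(\mathcal X,\tau)$ is continuous on $\mathbb R^k$. *)

theory Defs
  imports "HOL-Analysis.Analysis"
begin

end

theory Submission
  imports Defs
begin

(* H is lower semicontinuous, being a supremum of the continuous functions h(-,tau).
   For the other half fix c in Omega and 0 < t < 1. Shrinking the closure of Omega towards c
   by the factor t gives a compact set K_t inside Omega, so X |-> max over K_t of h(X,-) is
   continuous. Concavity gives (1 - t) h(X,c) + t h(X,tau) <= max over K_t of h(X,-), hence
   the continuous functions (max over K_t of h(X,-) - (1 - t) h(X,c)) / t lie above H, and at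
   any X they are at most (H(X) - (1 - t) h(X,c)) / t, which tends to H(X) as t -> 1.
   So H is also upper semicontinuous. *)

lemma continuous_on_prod_slices:
  assumes "continuous_on (A \<times> B) (\<lambda>(x, y). f x y)"
  shows "y \<in> B \<Longrightarrow> continuous_on A (\<lambda>x. f x y)"
    and "x \<in> A \<Longrightarrow> continuous_on B (f x)"
proof -
  show "continuous_on A (\<lambda>x. f x y)" if "y \<in> B"
    using continuous_on_compose2[OF assms continuous_on_Pair[OF continuous_on_id continuous_on_const]] that
    by auto
  show "continuous_on B (f x)" if "x \<in> A"
    using continuous_on_compose2[OF assms continuous_on_Pair[OF continuous_on_const continuous_on_id]] that
    by auto
qed

lemma homothety_closure_subset_interior:
  fixes S :: "'a::euclidean_space set"
  assumes "convex S" "c \<in> interior S" "0 \<le> t" "t < 1"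
  shows "(\<lambda>x. (1 - t) *\<^sub>R c + t *\<^sub>R x) ` closure S \<subseteq> interior S"
proof
  fix y assume "y \<in> (\<lambda>x. (1 - t) *\<^sub>R c + t *\<^sub>R x) ` closure S"
  then obtain x where x: "x \<in> closure S" "y = (1 - t) *\<^sub>R c + t *\<^sub>R x" by blast
  have "x - (1 - t) *\<^sub>R (x - c) \<in> interior S"
    using mem_interior_closure_convex_shrink[OF assms(1,2) x(1)] assms(3,4) by simp
  then show "y \<in> interior S" by (simp add: x(2) algebra_simps)
qed

lemma cSUP_le_cSUP_add:
  fixes f g :: "'a \<Rightarrow> real"
  assumes "A \<noteq> {}" "bdd_above (g ` A)" "\<And>x. x \<in> A \<Longrightarrow> f x \<le> g x + e"
  shows "(SUP x\<in>A. f x) \<le> (SUP x\<in>A. g x) + e"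
  using assms by (intro cSUP_least) (auto intro: order_trans[OF _ add_right_mono[OF cSUP_upper]])

lemma continuous_on_SUP_compact:
  fixes f :: "'a::topological_space \<Rightarrow> 'b::topological_space \<Rightarrow> real"
  assumes "compact K" "K \<noteq> {}" "continuous_on (UNIV \<times> K) (\<lambda>(x, y). f x y)"
  shows "continuous_on UNIV (\<lambda>x. SUP y\<in>K. f x y)"
  unfolding continuous_on_def
proof
  fix x0 :: 'a
  have bdd: "bdd_above (f x ` K)" for x
  proof -
    have "continuous_on K (f x)"
      using assms(3) by (rule continuous_on_prod_slices) simp
    then show ?thesis
      using assms(1) by (intro bounded_imp_bdd_above compact_imp_bounded compact_continuous_image)
  qed
  show "((\<lambda>x. SUP y\<in>K. f x y) \<longlongrightarrow> (SUP y\<in>K. f x0 y)) (at x0)"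
    unfolding tendsto_iff
  proof (intro allI impI)
    fix e :: real assume "e > 0"
    then obtain U where "x0 \<in> U" "open U"
      and close: "\<forall>x\<in>U \<inter> UNIV. \<forall>y\<in>K. dist (f x y) (f x0 y) \<le> e / 2"
      using continuous_on_prod_compactE[OF assms(3,1) UNIV_I, of "e / 2"] by auto
    have "dist (SUP y\<in>K. f x y) (SUP y\<in>K. f x0 y) < e" if "x \<in> U" for x
    proof -
      have near: "f x y \<le> f x0 y + e / 2 \<and> f x0 y \<le> f x y + e / 2" if "y \<in> K" for y
      proof -
        have "dist (f x y) (f x0 y) \<le> e / 2" using close \<open>x \<in> U\<close> that by blast
        then show ?thesis unfolding dist_real_def by linarith
      qed
      have "(SUP y\<in>K. f x y) \<le> (SUP y\<in>K. f x0 y) + e / 2"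
        by (rule cSUP_le_cSUP_add[OF assms(2) bdd]) (use near in blast)
      moreover have "(SUP y\<in>K. f x0 y) \<le> (SUP y\<in>K. f x y) + e / 2"
        by (rule cSUP_le_cSUP_add[OF assms(2) bdd]) (use near in blast)
      ultimately show ?thesis
        using \<open>e > 0\<close> by (simp add: dist_real_def)
    qed
    then show "\<forall>\<^sub>F x in at x0. dist (SUP y\<in>K. f x y) (SUP y\<in>K. f x0 y) < e"
      using \<open>x0 \<in> U\<close> \<open>open U\<close> eventually_at_topological by blast
  qed
qed

lemma continuous_at_by_minorants_majorants:
  fixes H :: "'a::t2_space \<Rightarrow> 'b::linorder_topology"
  assumes "\<And>a. a < H x \<Longrightarrow> \<exists>f. continuous (at x) f \<and> a < f x \<and> (\<forall>y. f y \<le> H y)"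
    and "\<And>a. H x < a \<Longrightarrow> \<exists>g. continuous (at x) g \<and> g x < a \<and> (\<forall>y. H y \<le> g y)"
  shows "continuous (at x) H"
  unfolding continuous_within
proof (rule order_tendstoI)
  fix a assume "a < H x"
  then obtain f where "continuous (at x) f" "a < f x" "\<forall>y. f y \<le> H y" using assms(1) by blast
  then have "\<forall>\<^sub>F y in at x. a < f y"
    by (auto simp: continuous_within intro: order_tendstoD(1))
  then show "\<forall>\<^sub>F y in at x. a < H y"
    by (rule eventually_mono) (use \<open>\<forall>y. f y \<le> H y\<close> less_le_trans in blast)
next
  fix a assume "H x < a"
  then obtain g where "continuous (at x) g" "g x < a" "\<forall>y. H y \<le> g y" using assms(2) by blast
  then have "\<forall>\<^sub>F y in at x. g y < a"
    by (auto simp: continuous_within intro: order_tendstoD(2))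
  then show "\<forall>\<^sub>F y in at x. H y < a"
    by (rule eventually_mono) (use \<open>\<forall>y. H y \<le> g y\<close> le_less_trans in blast)
qed

lemma concave_on_SUP_le_homothety_SUP:
  fixes f :: "'a::real_vector \<Rightarrow> real"
  assumes "concave_on S f" "c \<in> S" "0 < t" "t \<le> 1"
    and "(\<lambda>x. (1 - t) *\<^sub>R c + t *\<^sub>R x) ` S \<subseteq> K" "bdd_above (f ` K)"
  shows "bdd_above (f ` S)" "(SUP x\<in>S. f x) \<le> ((SUP y\<in>K. f y) - (1 - t) * f c) / t"
proof -
  have bound: "f x \<le> ((SUP y\<in>K. f y) - (1 - t) * f c) / t" if "x \<in> S" for x
  proof -
    have "(1 - t) * f c + t * f x \<le> f ((1 - t) *\<^sub>R c + t *\<^sub>R x)"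
      using concave_onD[OF assms(1)] assms(2-4) that by simp
    also have "\<dots> \<le> (SUP y\<in>K. f y)"
      using assms(5,6) that by (auto intro: cSUP_upper)
    finally show ?thesis using assms(3) by (simp add: field_simps)
  qed
  then show "bdd_above (f ` S)" by (rule bdd_aboveI2)
  show "(SUP x\<in>S. f x) \<le> ((SUP y\<in>K. f y) - (1 - t) * f c) / t"
    using assms(2) bound by (intro cSUP_least) auto
qed

lemma eventually_at_left_1_quotient_less:
  fixes u v a :: real
  assumes "u < a"
  shows "\<forall>\<^sub>F t in at_left 1. 0 < t \<and> t < 1 \<and> (u - (1 - t) * v) / t < a"
proof -
  have "((\<lambda>t. (u - (1 - t) * v) / t) \<longlongrightarrow> u) (at_left 1)"
    by (auto intro!: tendsto_eq_intros)
  then have "\<forall>\<^sub>F t in at_left 1. (u - (1 - t) * v) / t < a"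
    using assms by (rule order_tendstoD(2))
  moreover have "\<forall>\<^sub>F t in at_left 1. t \<in> {0<..<1::real}"
    by (rule eventually_at_left_real) simp
  ultimately show ?thesis
    by eventually_elim auto
qed

lemma continuous_on_SUP_by_majorants:
  fixes f :: "'a::t2_space \<Rightarrow> 'b \<Rightarrow> real"
  assumes "S \<noteq> {}" "\<And>\<tau>. \<tau> \<in> S \<Longrightarrow> continuous_on UNIV (\<lambda>x. f x \<tau>)" "\<And>x. bdd_above (f x ` S)"
    and "\<And>x a. (SUP \<tau>\<in>S. f x \<tau>) < a \<Longrightarrow>
           \<exists>g. continuous_on UNIV g \<and> g x < a \<and> (\<forall>y. (SUP \<tau>\<in>S. f y \<tau>) \<le> g y)"
  shows "continuous_on UNIV (\<lambda>x. SUP \<tau>\<in>S. f x \<tau>)"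
  unfolding continuous_on_eq_continuous_at[OF open_UNIV]
proof (intro ballI continuous_at_by_minorants_majorants)
  fix x a
  assume "a < (SUP \<tau>\<in>S. f x \<tau>)"
  then obtain \<tau> where "\<tau> \<in> S" "a < f x \<tau>"
    using less_cSUP_iff[OF assms(1,3)] by auto
  then show "\<exists>g. continuous (at x) g \<and> a < g x \<and> (\<forall>y. g y \<le> (SUP \<tau>\<in>S. f y \<tau>))"
    using assms(2,3)
    by (intro exI[of _ "\<lambda>y. f y \<tau>"]) (auto simp: continuous_on_eq_continuous_at intro: cSUP_upper)
next
  fix x a
  assume "(SUP \<tau>\<in>S. f x \<tau>) < a"
  then show "\<exists>g. continuous (at x) g \<and> g x < a \<and> (\<forall>y. (SUP \<tau>\<in>S. f y \<tau>) \<le> g y)"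
    using assms(4) by (metis continuous_on_eq_continuous_at open_UNIV UNIV_I)
qed

lemma SUP_concave_continuous_majorant:
  fixes \<Omega> :: "'b::euclidean_space set" and h :: "'a::topological_space \<Rightarrow> 'b \<Rightarrow> real"
  assumes "open \<Omega>" "bounded \<Omega>" "convex \<Omega>"
    and h_cont: "continuous_on (UNIV \<times> \<Omega>) (\<lambda>(x, \<tau>). h x \<tau>)"
    and h_concave: "\<And>x. concave_on \<Omega> (h x)"
    and "c \<in> \<Omega>" "0 < t" "t < 1"
  shows "bdd_above (h x ` \<Omega>)"
    and "\<exists>g. continuous_on UNIV g \<and> (\<forall>x. (SUP \<tau>\<in>\<Omega>. h x \<tau>) \<le> g x)
           \<and> (\<forall>x. g x \<le> ((SUP \<tau>\<in>\<Omega>. h x \<tau>) - (1 - t) * h x c) / t)"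
proof -
  define K where "K = (\<lambda>x. (1 - t) *\<^sub>R c + t *\<^sub>R x) ` closure \<Omega>"
  have K: "compact K" "K \<noteq> {}" "K \<subseteq> \<Omega>"
    using homothety_closure_subset_interior[OF assms(3), of c t] assms(1,2,6-8)
    by (auto simp: K_def interior_open compact_closure intro!: compact_continuous_image continuous_intros)
  have h_on_K: "continuous_on (UNIV \<times> K) (\<lambda>(x, \<tau>). h x \<tau>)"
    using K(3) by (intro continuous_on_subset[OF h_cont]) auto
  have bdd_K: "bdd_above (h x ` K)" for x
    using K(1) continuous_on_prod_slices(2)[OF h_on_K]
    by (intro bounded_imp_bdd_above compact_imp_bounded compact_continuous_image) auto
  have "(\<lambda>x. (1 - t) *\<^sub>R c + t *\<^sub>R x) ` \<Omega> \<subseteq> K"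
    unfolding K_def using closure_subset by blast
  note shrink = concave_on_SUP_le_homothety_SUP[OF h_concave \<open>c \<in> \<Omega>\<close> \<open>0 < t\<close> _ this bdd_K]
  show bdd: "bdd_above (h x ` \<Omega>)" for x
    using shrink(1) \<open>t < 1\<close> by simp
  define g where "g x = ((SUP \<sigma>\<in>K. h x \<sigma>) - (1 - t) * h x c) / t" for x
  have "continuous_on UNIV g"
    using continuous_on_SUP_compact[OF K(1,2) h_on_K] continuous_on_prod_slices(1)[OF h_cont \<open>c \<in> \<Omega>\<close>]
      \<open>0 < t\<close> unfolding g_def by (intro continuous_intros) auto
  moreover have "(SUP \<tau>\<in>\<Omega>. h x \<tau>) \<le> g x" for x
    using shrink(2) \<open>t < 1\<close> unfolding g_def by simp
  moreover have "g x \<le> ((SUP \<tau>\<in>\<Omega>. h x \<tau>) - (1 - t) * h x c) / t" for x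
  proof -
    have "(SUP \<sigma>\<in>K. h x \<sigma>) \<le> (SUP \<tau>\<in>\<Omega>. h x \<tau>)"
      using K(2,3) bdd by (intro cSUP_subset_mono) auto
    then show ?thesis
      unfolding g_def using \<open>0 < t\<close> by (intro divide_right_mono) auto
  qed
  ultimately show "\<exists>g. continuous_on UNIV g \<and> (\<forall>x. (SUP \<tau>\<in>\<Omega>. h x \<tau>) \<le> g x)
           \<and> (\<forall>x. g x \<le> ((SUP \<tau>\<in>\<Omega>. h x \<tau>) - (1 - t) * h x c) / t)"
    by blast
qed

theorem proposition7p1:
  fixes \<Omega> :: "(real ^ 'm) set"
    and h :: "real ^ 'k \<Rightarrow> real ^ 'm \<Rightarrow> real"
  assumes "open \<Omega>" and "bounded \<Omega>" and "convex \<Omega>"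
    and "continuous_on (UNIV \<times> \<Omega>) (\<lambda>(X, \<tau>). h X \<tau>)"
    and "\<And>X. concave_on \<Omega> (h X)"
  shows "continuous_on UNIV (\<lambda>X. SUP \<tau>\<in>\<Omega>. h X \<tau>)"
proof (cases "\<Omega> = {}")
  case True
  then show ?thesis by simp
next
  case False
  then obtain c where c: "c \<in> \<Omega>" by blast
  note majorant = SUP_concave_continuous_majorant[OF assms c]
  show ?thesis
  proof (rule continuous_on_SUP_by_majorants[OF False])
    show "continuous_on UNIV (\<lambda>X. h X \<tau>)" if "\<tau> \<in> \<Omega>" for \<tau>
      using assms(4) that by (rule continuous_on_prod_slices)
    show "bdd_above (h X ` \<Omega>)" for X
      using majorant(1)[of "1/2"] by simp
    fix X0 a
    assume "(SUP \<tau>\<in>\<Omega>. h X0 \<tau>) < a"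
    then obtain t where "0 < t" "t < 1" "((SUP \<tau>\<in>\<Omega>. h X0 \<tau>) - (1 - t) * h X0 c) / t < a"
      using eventually_happens'[OF trivial_limit_at_left_real eventually_at_left_1_quotient_less] by blast
    then show "\<exists>g. continuous_on UNIV g \<and> g X0 < a \<and> (\<forall>X. (SUP \<tau>\<in>\<Omega>. h X \<tau>) \<le> g X)"
      using majorant(2) by (meson le_less_trans)
  qed
qed

end
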